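(* Under the hypotheses of the following setting, suppose in addition that ${\bf f}_1$ and ${\bf f}_2$ are time-invariant. Setting: ${\bf f}_1,{\bf f}_2:\mathbb{R}^m\to\mathbb{R}^m$ continuously differentiable with uniformly bounded Jacobians whose symmetric parts are uniformly negative definite ($\le -\beta I$ for some $\beta>0$); ${\bf G}$ a constant $m\times p$ matrix; $k_{12},k_{21}>0$; constant delays $T_{12},T_{21}\ge0$; and the system $$\dot{\bf x}_1={\bf f}_1({\bf x}_1)+\tfrac{1}{k_{21}}{\bf G}{\bf G}^T\big({\bf x}_2(t-T_{21})-{\bf x}_1(t)\big),\quad \dot{\bf x}_2={\bf f}_2({\bf x}_2)+\tfrac{1}{k_{12}}{\bf G}{\bf G}^T\big({\bf x}_1(t-T_{12})-{\bf x}_2(t)\big).$$ Then there is a unique equilibrium point $({\bf x}_1^*,{\bf x}_2^* )$, which is the same for all values of $T_{12},T_{21}$, and all solutions converge to it, independently of the initial conditions and of the delays. *)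

theory Defs
  imports "HOL-Analysis.Analysis"
begin

definition contracting_field :: "(real^'m \<Rightarrow> real^'m) \<Rightarrow> bool" where
  "contracting_field f \<longleftrightarrow>
     (\<exists>J :: real^'m \<Rightarrow> real^'m^'m.
        (\<forall>x. (f has_derivative (\<lambda>h. J x *v h)) (at x)) \<and>
        continuous_on UNIV J \<and>
        (\<exists>B. \<forall>x. norm (J x) \<le> B) \<and>
        (\<exists>\<beta>>0. \<forall>x h. h \<bullet> (J x *v h) \<le> - \<beta> * (h \<bullet> h)))"

definition coupled_equilibrium ::
  "(real^'m \<Rightarrow> real^'m) \<Rightarrow> (real^'m \<Rightarrow> real^'m) \<Rightarrow> real^'p^'m \<Rightarrow> real \<Rightarrow> real \<Rightarrow>
   real^'m \<Rightarrow> real^'m \<Rightarrow> bool" where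
  "coupled_equilibrium f1 f2 G k12 k21 a b \<longleftrightarrow>
     f1 a + (1 / k21) *\<^sub>R ((G ** transpose G) *v (b - a)) = 0 \<and>
     f2 b + (1 / k12) *\<^sub>R ((G ** transpose G) *v (a - b)) = 0"

text \<open>A solution of the delayed coupled system: x1, x2 are defined (continuous)
  on [-max T12 T21, oo), the values on [-max T12 T21, 0] being the arbitrary
  continuous initial history, and they satisfy the delay ODEs for t > 0.\<close>
definition coupled_solution ::
  "(real^'m \<Rightarrow> real^'m) \<Rightarrow> (real^'m \<Rightarrow> real^'m) \<Rightarrow> real^'p^'m \<Rightarrow> real \<Rightarrow> real \<Rightarrow>
   real \<Rightarrow> real \<Rightarrow> (real \<Rightarrow> real^'m) \<Rightarrow> (real \<Rightarrow> real^'m) \<Rightarrow> bool" where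
  "coupled_solution f1 f2 G k12 k21 T12 T21 x1 x2 \<longleftrightarrow>
     continuous_on {- max T12 T21..} x1 \<and> continuous_on {- max T12 T21..} x2 \<and>
     (\<forall>t>0.
        (x1 has_vector_derivative
           (f1 (x1 t) + (1 / k21) *\<^sub>R ((G ** transpose G) *v (x2 (t - T21) - x1 t)))) (at t) \<and>
        (x2 has_vector_derivative
           (f2 (x2 t) + (1 / k12) *\<^sub>R ((G ** transpose G) *v (x1 (t - T12) - x2 t)))) (at t))"

end

theory Submission
  imports Defs
begin

text \<open>Integrating the Jacobian bound along segments makes each field strongly dissipative,
  \<open>(f x - f y) \<bullet> (x - y) \<le> - \<beta> |x - y|\<^sup>2\<close>. After multiplying the equations by \<open>k21\<close> and
  \<open>k12\<close>, an equilibrium is a zero of \<open>F (x, y) = (k21 f1 x + M (y - x), k12 f2 y + M (x - y))\<close>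
  with \<open>M = G G\<^sup>T\<close> positive semidefinite, so \<open>F\<close> is strongly dissipative and Lipschitz, and it
  has exactly one zero because \<open>z + \<epsilon> F z\<close> is a contraction for small \<open>\<epsilon>\<close>; the delays do not
  enter. For convergence take the Lyapunov-Krasovskii functional
  \<open>V t = k21 |x1 t - a|\<^sup>2 + k12 |x2 t - b|\<^sup>2
    + \<integral>\<^bsub>t-T21\<^esub>\<^bsup>t\<^esup> |G\<^sup>T (x2 - b)|\<^sup>2 + \<integral>\<^bsub>t-T12\<^esub>\<^bsup>t\<^esup> |G\<^sup>T (x1 - a)|\<^sup>2\<close>:
  the integrals pay for the power injected by the delayed coupling, so
  \<open>V' \<le> - 2 c |(x1, x2) - (a, b)|\<^sup>2\<close> for every choice of delays. Hence the trajectory is bounded,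
  so is its velocity, and a Barbalat-type argument yields convergence.\<close>

definition strongly_dissipative :: "real \<Rightarrow> ('a::real_inner \<Rightarrow> 'a) \<Rightarrow> bool" where
  "strongly_dissipative c F \<longleftrightarrow> (\<forall>x y. (F x - F y) \<bullet> (x - y) \<le> - c * (norm (x - y))\<^sup>2)"

lemma strongly_dissipative_add:
  assumes "strongly_dissipative c F" "strongly_dissipative d H"
  shows "strongly_dissipative (c + d) (\<lambda>x. F x + H x)"
  unfolding strongly_dissipative_def
proof (intro allI)
  fix x y
  have "(F x + H x - (F y + H y)) \<bullet> (x - y) = (F x - F y) \<bullet> (x - y) + (H x - H y) \<bullet> (x - y)"
    by (simp add: inner_diff_left inner_add_left)
  also have "\<dots> \<le> - c * (norm (x - y))\<^sup>2 + - d * (norm (x - y))\<^sup>2"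
    using assms unfolding strongly_dissipative_def by (intro add_mono) auto
  finally show "(F x + H x - (F y + H y)) \<bullet> (x - y) \<le> - (c + d) * (norm (x - y))\<^sup>2"
    by (simp add: algebra_simps)
qed

lemma strongly_dissipative_scaleR:
  assumes "strongly_dissipative c F" "k \<ge> 0"
  shows "strongly_dissipative (k * c) (\<lambda>x. k *\<^sub>R F x)"
  unfolding strongly_dissipative_def
proof (intro allI)
  fix x y
  have "(k *\<^sub>R F x - k *\<^sub>R F y) \<bullet> (x - y) = k * ((F x - F y) \<bullet> (x - y))"
    by (simp add: scaleR_diff_right[symmetric])
  also have "\<dots> \<le> k * (- c * (norm (x - y))\<^sup>2)"
    using assms unfolding strongly_dissipative_def by (intro mult_left_mono) auto
  finally show "(k *\<^sub>R F x - k *\<^sub>R F y) \<bullet> (x - y) \<le> - (k * c) * (norm (x - y))\<^sup>2"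
    by simp
qed

lemma strongly_dissipative_mono:
  assumes "strongly_dissipative c F" "d \<le> c"
  shows "strongly_dissipative d F"
  unfolding strongly_dissipative_def
proof (intro allI)
  fix x y :: 'a
  have "d * (norm (x - y))\<^sup>2 \<le> c * (norm (x - y))\<^sup>2"
    using assms(2) by (rule mult_right_mono) simp
  moreover have "(F x - F y) \<bullet> (x - y) \<le> - c * (norm (x - y))\<^sup>2"
    using assms(1) by (simp add: strongly_dissipative_def)
  ultimately show "(F x - F y) \<bullet> (x - y) \<le> - d * (norm (x - y))\<^sup>2"
    by simp
qed

lemma strongly_dissipative_map_prod:
  assumes "strongly_dissipative c F" "strongly_dissipative d H"
  shows "strongly_dissipative (min c d) (map_prod F H)"
  unfolding strongly_dissipative_def
proof (intro allI)
  fix z z' :: "'a \<times> 'b"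
  obtain x y x' y' where z: "z = (x, y)" "z' = (x', y')" by fastforce
  have "(F x - F x') \<bullet> (x - x') \<le> - min c d * (norm (x - x'))\<^sup>2"
    using strongly_dissipative_mono[OF assms(1) min.cobounded1]
    by (simp add: strongly_dissipative_def)
  moreover have "(H y - H y') \<bullet> (y - y') \<le> - min c d * (norm (y - y'))\<^sup>2"
    using strongly_dissipative_mono[OF assms(2) min.cobounded2]
    by (simp add: strongly_dissipative_def)
  ultimately show "(map_prod F H z - map_prod F H z') \<bullet> (z - z') \<le> - min c d * (norm (z - z'))\<^sup>2"
    by (simp add: z norm_Pair algebra_simps)
qed

lemma strongly_dissipative_lipschitz_ex1_zero:
  fixes F :: "'a::{real_inner, complete_space} \<Rightarrow> 'a"
  assumes "c > 0" and dissipative: "strongly_dissipative c F"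
    and lipschitz: "L-lipschitz_on UNIV F"
  shows "\<exists>!z. F z = 0"
proof -
  define L' where "L' = max L c"
  have L': "L' \<ge> c" "L'-lipschitz_on UNIV F"
    using lipschitz by (auto simp: L'_def intro: lipschitz_on_mono)
  define \<epsilon> where "\<epsilon> = c / L'\<^sup>2"
  define q where "q = 1 - c\<^sup>2 / L'\<^sup>2"
  have q: "0 \<le> q" "q < 1"
    using L' \<open>c > 0\<close> by (auto simp: q_def power_mono divide_le_eq_1)
  have \<epsilon>: "\<epsilon> > 0" using L' \<open>c > 0\<close> by (simp add: \<epsilon>_def)
  \<comment> \<open>\<open>|d + \<epsilon> D|\<^sup>2 \<le> (1 - 2 \<epsilon> c + \<epsilon>\<^sup>2 L'\<^sup>2) |d|\<^sup>2\<close>; this \<open>\<epsilon>\<close> minimises the factor to \<open>q\<close>\<close>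
  have "dist (z + \<epsilon> *\<^sub>R F z) (z' + \<epsilon> *\<^sub>R F z') \<le> sqrt q * dist z z'" for z z'
  proof -
    define d where "d = z - z'"
    define D where "D = F z - F z'"
    have "D \<bullet> d \<le> - c * (norm d)\<^sup>2"
      using dissipative by (simp add: strongly_dissipative_def D_def d_def)
    moreover have "(norm D)\<^sup>2 \<le> (L' * norm d)\<^sup>2"
      using lipschitz_onD[OF L'(2), of z z']
      by (intro power_mono) (simp_all add: D_def d_def dist_norm)
    moreover have "(norm (d + \<epsilon> *\<^sub>R D))\<^sup>2 = (norm d)\<^sup>2 + 2 * \<epsilon> * (D \<bullet> d) + \<epsilon>\<^sup>2 * (norm D)\<^sup>2"
      unfolding power2_norm_eq_inner
      by (simp add: inner_add_left inner_add_right inner_commute[of d D] power2_eq_square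
          algebra_simps)
    ultimately have "(norm (d + \<epsilon> *\<^sub>R D))\<^sup>2
        \<le> (norm d)\<^sup>2 + 2 * \<epsilon> * (- c * (norm d)\<^sup>2) + \<epsilon>\<^sup>2 * (L' * norm d)\<^sup>2"
      using \<epsilon> by (simp only:) (intro add_mono order_refl mult_left_mono; simp)
    also have "\<dots> = (sqrt q * norm d)\<^sup>2"
      using L' \<open>c > 0\<close> q by (simp add: q_def \<epsilon>_def power_mult_distrib field_simps power2_eq_square)
    finally have "norm (d + \<epsilon> *\<^sub>R D) \<le> sqrt q * norm d"
      by (rule power2_le_imp_le) (use q in simp)
    then show ?thesis
      by (simp add: dist_norm d_def D_def algebra_simps)
  qed
  then obtain z where "z + \<epsilon> *\<^sub>R F z = z"
    using banach_fix_type[of "sqrt q" "\<lambda>z. z + \<epsilon> *\<^sub>R F z"] q by (auto simp: real_sqrt_lt_1_iff)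
  then have "F z = 0" using \<epsilon> by simp
  moreover have "z' = z" if "F z' = 0" for z'
  proof -
    have "0 \<le> - c * (norm (z' - z))\<^sup>2"
      using dissipative \<open>F z = 0\<close> that unfolding strongly_dissipative_def
      by (metis diff_self inner_zero_left)
    then show ?thesis using \<open>c > 0\<close> by (simp add: mult_le_0_iff)
  qed
  ultimately show ?thesis by blast
qed

lemma strongly_dissipative_if_derivative:
  fixes f :: "'a::real_inner \<Rightarrow> 'a"
  assumes deriv: "\<And>x. (f has_derivative f' x) (at x)"
    and neg: "\<And>x h. h \<bullet> f' x h \<le> - \<beta> * (norm h)\<^sup>2"
  shows "strongly_dissipative \<beta> f"
  unfolding strongly_dissipative_def
proof (intro allI)
  fix x y :: 'a
  define d where "d = x - y"
  define \<phi> where "\<phi> t = f (y + t *\<^sub>R d) \<bullet> d + \<beta> * t * (norm d)\<^sup>2" for t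
  have \<phi>_deriv: "(\<phi> has_real_derivative d \<bullet> f' (y + t *\<^sub>R d) d + \<beta> * (norm d)\<^sup>2) (at t)" for t
  proof -
    have "((\<lambda>t. f (y + t *\<^sub>R d)) has_derivative (\<lambda>s. f' (y + t *\<^sub>R d) (s *\<^sub>R d))) (at t)"
      by (rule has_derivative_compose[OF _ deriv]) (auto intro!: derivative_eq_intros)
    moreover have "linear (f' (y + t *\<^sub>R d))"
      using deriv has_derivative_linear by blast
    ultimately have "(\<phi> has_derivative
        (\<lambda>s. f' (y + t *\<^sub>R d) (s *\<^sub>R d) \<bullet> d + \<beta> * s * (norm d)\<^sup>2)) (at t)"
      unfolding \<phi>_def by (auto intro!: derivative_eq_intros)
    moreover have "(\<lambda>s. f' (y + t *\<^sub>R d) (s *\<^sub>R d) \<bullet> d + \<beta> * s * (norm d)\<^sup>2)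
        = (*) (d \<bullet> f' (y + t *\<^sub>R d) d + \<beta> * (norm d)\<^sup>2)"
      using \<open>linear _\<close> by (simp add: fun_eq_iff linear_scale inner_commute algebra_simps)
    ultimately show ?thesis by (simp add: has_field_derivative_def)
  qed
  have "\<phi> 1 \<le> \<phi> 0"
  proof (rule DERIV_nonpos_imp_nonincreasing[of 0 1 \<phi>])
    fix t :: real assume "0 \<le> t" "t \<le> 1"
    show "\<exists>D. (\<phi> has_real_derivative D) (at t) \<and> D \<le> 0"
      using \<phi>_deriv[of t] neg[of d "y + t *\<^sub>R d"] by auto
  qed simp
  then show "(f x - f y) \<bullet> (x - y) \<le> - \<beta> * (norm (x - y))\<^sup>2"
    by (simp add: \<phi>_def d_def inner_diff_left algebra_simps)
qed

lemma contracting_field_strongly_dissipative: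
  assumes "contracting_field f"
  obtains \<beta> where "\<beta> > 0" "strongly_dissipative \<beta> f"
proof -
  from assms obtain J \<beta> where "\<And>x. (f has_derivative (\<lambda>h. J x *v h)) (at x)"
    and "\<beta> > 0" and "\<And>x h. h \<bullet> (J x *v h) \<le> - \<beta> * (h \<bullet> h)"
    unfolding contracting_field_def by blast
  then show ?thesis
    using that strongly_dissipative_if_derivative[of f "\<lambda>x h. J x *v h" \<beta>]
    by (simp add: power2_norm_eq_inner)
qed

lemma contracting_field_lipschitz:
  fixes f :: "real^'n \<Rightarrow> real^'n"
  assumes "contracting_field f"
  obtains L where "L-lipschitz_on UNIV f"
proof -
  from assms obtain J B where deriv: "\<And>x. (f has_derivative (\<lambda>h. J x *v h)) (at x)"
    and bound: "\<And>x. norm (J x) \<le> B"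
    unfolding contracting_field_def by blast
  have "\<bar>J x $ i $ j\<bar> \<le> \<bar>B\<bar>" for x i j
    using component_le_norm_cart[of "J x $ i" j] Finite_Cartesian_Product.norm_nth_le[of "J x" i]
      bound[of x]
    by linarith
  then have "onorm (\<lambda>h. J x *v h) \<le> real CARD('n) * real CARD('n) * \<bar>B\<bar>" for x
    by (intro onorm_le_matrix_component)
  then show ?thesis
    by (intro that bounded_derivative_imp_lipschitz[where f' = "\<lambda>x h. J x *v h"])
      (auto intro: has_derivative_at_withinI deriv)
qed

lemma contracting_field_pair_strongly_dissipative:
  assumes "contracting_field f1" "contracting_field f2" "k12 > 0" "k21 > 0"
  obtains c where "c > 0" "strongly_dissipative c (map_prod (\<lambda>x. k21 *\<^sub>R f1 x) (\<lambda>x. k12 *\<^sub>R f2 x))"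
proof -
  obtain \<beta>1 where "\<beta>1 > 0" and dissipative1: "strongly_dissipative \<beta>1 f1"
    by (rule contracting_field_strongly_dissipative[OF assms(1)])
  obtain \<beta>2 where "\<beta>2 > 0" and dissipative2: "strongly_dissipative \<beta>2 f2"
    by (rule contracting_field_strongly_dissipative[OF assms(2)])
  have "min (k21 * \<beta>1) (k12 * \<beta>2) > 0"
    using \<open>\<beta>1 > 0\<close> \<open>\<beta>2 > 0\<close> assms(3,4) by simp
  moreover have "strongly_dissipative (min (k21 * \<beta>1) (k12 * \<beta>2))
      (map_prod (\<lambda>x. k21 *\<^sub>R f1 x) (\<lambda>x. k12 *\<^sub>R f2 x))"
    using dissipative1 dissipative2 assms(3,4)
    by (intro strongly_dissipative_map_prod strongly_dissipative_scaleR) auto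
  ultimately show ?thesis by (rule that)
qed

lemma lipschitz_on_map_prod:
  assumes "L-lipschitz_on UNIV f" "M-lipschitz_on UNIV g"
  shows "(sqrt (L\<^sup>2 + M\<^sup>2))-lipschitz_on UNIV (map_prod f g)"
proof -
  have "1-lipschitz_on UNIV fst" "1-lipschitz_on UNIV snd"
    by (rule lipschitz_onI; simp add: dist_fst_le dist_snd_le)+
  then have "L-lipschitz_on UNIV (\<lambda>z. f (fst z))" "M-lipschitz_on UNIV (\<lambda>z. g (snd z))"
    using lipschitz_on_compose2[OF _ lipschitz_on_subset[OF assms(1) subset_UNIV]]
      lipschitz_on_compose2[OF _ lipschitz_on_subset[OF assms(2) subset_UNIV]]
    by fastforce+
  then show ?thesis
    unfolding map_prod_def split_def by (rule lipschitz_on_Pair)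
qed

definition coupling_field :: "real^'p^'m \<Rightarrow> (real^'m) \<times> (real^'m) \<Rightarrow> (real^'m) \<times> (real^'m)" where
  "coupling_field G z =
    ((G ** transpose G) *v (snd z - fst z), (G ** transpose G) *v (fst z - snd z))"

lemma inner_matrix_mult_transpose:
  fixes G :: "real^'p^'m"
  shows "x \<bullet> ((G ** transpose G) *v y) = (transpose G *v x) \<bullet> (transpose G *v y)"
  by (simp add: matrix_vector_mul_assoc[symmetric] dot_lmul_matrix[symmetric])

text \<open>With \<open>x', y'\<close> the delayed states, the power fed in by the delayed coupling is bounded by
  the decrease of the energy \<open>|G\<^sup>T _|\<^sup>2\<close> held in the delays; the defect is
  \<open>|G\<^sup>T (x - y')|\<^sup>2 + |G\<^sup>T (y - x')|\<^sup>2\<close>.\<close>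

lemma coupling_power_le:
  fixes G :: "real^'p^'m"
  shows "2 * (x \<bullet> ((G ** transpose G) *v (y' - x))) + 2 * (y \<bullet> ((G ** transpose G) *v (x' - y)))
    \<le> (norm (transpose G *v x'))\<^sup>2 - (norm (transpose G *v x))\<^sup>2
      + (norm (transpose G *v y'))\<^sup>2 - (norm (transpose G *v y))\<^sup>2"
proof -
  define u u' v v' where "u = transpose G *v x" and "u' = transpose G *v x'"
    and "v = transpose G *v y" and "v' = transpose G *v y'"
  have "2 * (x \<bullet> ((G ** transpose G) *v (y' - x))) + 2 * (y \<bullet> ((G ** transpose G) *v (x' - y)))
      = (norm u')\<^sup>2 - (norm u)\<^sup>2 + (norm v')\<^sup>2 - (norm v)\<^sup>2 - (norm (u - v'))\<^sup>2 - (norm (v - u'))\<^sup>2"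
    unfolding inner_matrix_mult_transpose power2_norm_eq_inner u_def u'_def v_def v'_def
    by (simp add: matrix_vector_mult_diff_distrib inner_diff_left inner_diff_right inner_commute
        algebra_simps)
  then show ?thesis
    by (simp add: u_def u'_def v_def v'_def)
qed

lemma strongly_dissipative_coupling_field:
  fixes G :: "real^'p^'m"
  shows "strongly_dissipative 0 (coupling_field G)"
  unfolding strongly_dissipative_def
proof (intro allI)
  fix z z' :: "(real^'m) \<times> (real^'m)"
  obtain a b a' b' where z: "z = (a, b)" "z' = (a', b')" by fastforce
  define x y where "x = a - a'" and "y = b - b'"
  have "coupling_field G z - coupling_field G z' = coupling_field G (x, y)"
    by (simp add: z coupling_field_def x_def y_def matrix_vector_mult_diff_distrib algebra_simps)
  moreover have "z - z' = (x, y)"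
    by (simp add: z x_def y_def)
  ultimately have "2 * ((coupling_field G z - coupling_field G z') \<bullet> (z - z'))
      = 2 * (x \<bullet> ((G ** transpose G) *v (y - x))) + 2 * (y \<bullet> ((G ** transpose G) *v (x - y)))"
    by (simp add: coupling_field_def inner_commute[of x] inner_commute[of y])
  also have "\<dots> \<le> 0"
    using coupling_power_le[of x G y y x] by linarith
  finally show "(coupling_field G z - coupling_field G z') \<bullet> (z - z') \<le> - 0 * (norm (z - z'))\<^sup>2"
    by simp
qed

lemma bounded_linear_coupling_field: "bounded_linear (coupling_field G)"
  unfolding coupling_field_def
  by (intro bounded_linear_Pair bounded_linear_compose[OF matrix_vector_mul_bounded_linear]
      bounded_linear_sub bounded_linear_fst bounded_linear_snd)

lemma coupled_equilibrium_iff_zero: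
  assumes "k12 > 0" "k21 > 0"
  shows "coupled_equilibrium f1 f2 G k12 k21 a b \<longleftrightarrow>
    map_prod (\<lambda>x. k21 *\<^sub>R f1 x) (\<lambda>x. k12 *\<^sub>R f2 x) (a, b) + coupling_field G (a, b) = 0"
proof -
  have "u + (1 / k) *\<^sub>R w = 0 \<longleftrightarrow> k *\<^sub>R u + w = 0" if "k > 0" for k :: real and u w :: "real^'a"
  proof -
    have "u + (1 / k) *\<^sub>R w = 0 \<longleftrightarrow> k *\<^sub>R (u + (1 / k) *\<^sub>R w) = 0"
      using that by simp
    also have "\<dots> \<longleftrightarrow> k *\<^sub>R u + w = 0"
      using that by (simp add: scaleR_add_right)
    finally show ?thesis .
  qed
  then show ?thesis
    using assms by (simp add: coupled_equilibrium_def coupling_field_def zero_prod_def)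
qed

lemma coupled_equilibrium_ex1:
  assumes "k12 > 0" "k21 > 0" "c > 0"
    and "strongly_dissipative c (map_prod (\<lambda>x. k21 *\<^sub>R f1 x) (\<lambda>x. k12 *\<^sub>R f2 x))"
    and "L1-lipschitz_on UNIV f1" "L2-lipschitz_on UNIV f2"
  shows "\<exists>!(a, b). coupled_equilibrium f1 f2 G k12 k21 a b"
proof -
  define F where "F z = map_prod (\<lambda>x. k21 *\<^sub>R f1 x) (\<lambda>x. k12 *\<^sub>R f2 x) z + coupling_field G z" for z
  have "strongly_dissipative (c + 0) F"
    unfolding F_def using assms(4) strongly_dissipative_coupling_field
    by (rule strongly_dissipative_add)
  moreover obtain K where "K-lipschitz_on UNIV (coupling_field G)"
    using bounded_linear.lipschitz_boundE[OF bounded_linear_coupling_field] by blast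
  then have "(sqrt ((\<bar>k21\<bar> * L1)\<^sup>2 + (\<bar>k12\<bar> * L2)\<^sup>2) + K)-lipschitz_on UNIV F"
    unfolding F_def using assms(5,6)
    by (intro lipschitz_on_add lipschitz_on_map_prod lipschitz_on_cmult)
  ultimately have "\<exists>!z. F z = 0"
    using \<open>c > 0\<close> by (intro strongly_dissipative_lipschitz_ex1_zero) auto
  moreover have "(\<lambda>(a, b). coupled_equilibrium f1 f2 G k12 k21 a b) = (\<lambda>z. F z = 0)"
    using coupled_equilibrium_iff_zero[OF assms(1,2), of f1 f2 G] by (auto simp: F_def)
  ultimately show ?thesis
    by simp
qed

lemma has_real_derivative_integral_window:
  fixes g :: "real \<Rightarrow> real"
  assumes cont: "continuous_on {a..} g" and "T \<ge> 0" "a + T < t"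
  shows "((\<lambda>s. integral {s - T..s} g) has_real_derivative g t - g (t - T)) (at t)"
proof -
  define P where "P s = integral {a..s} g" for s
  have P_deriv: "(P has_real_derivative g s) (at s)" if "a < s" for s
  proof -
    have "continuous_on {a..s + 1} g" using cont by (rule continuous_on_subset) auto
    then have "(P has_real_derivative g s) (at s within {a..s + 1})"
      unfolding P_def using that by (intro integral_has_real_derivative) auto
    moreover have "at s within {a..s + 1} = at s"
      using that by (intro at_within_interior) auto
    ultimately show ?thesis by simp
  qed
  have "((\<lambda>s. P (s - T)) has_real_derivative g (t - T)) (at t)"
    using DERIV_shift[of P "g (t - T)" t "- T"] P_deriv[of "t - T"] assms by simp
  then have window_deriv: "((\<lambda>s. P s - P (s - T)) has_real_derivative g t - g (t - T)) (at t)"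
    using P_deriv[of t] assms by (intro DERIV_diff) auto
  have window_eq: "P s - P (s - T) = integral {s - T..s} g" if "s \<in> {a + T<..}" for s
  proof -
    have "g integrable_on {a..s}"
      using cont by (intro integrable_continuous_real) (auto intro: continuous_on_subset)
    then have "integral {a..s - T} g + integral {s - T..s} g = integral {a..s} g"
      using that \<open>T \<ge> 0\<close> by (intro Henstock_Kurzweil_Integration.integral_combine) auto
    then show ?thesis by (simp add: P_def)
  qed
  show ?thesis
    using assms
    by (intro has_field_derivative_transform_within_open[OF window_deriv open_greaterThan _ window_eq])
      auto
qed

lemma integral_window_nonneg:
  fixes g :: "real \<Rightarrow> real"
  assumes "continuous_on {a..} g" "a \<le> t - T" "\<And>s. g s \<ge> 0"
  shows "integral {t - T..t} g \<ge> 0"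
proof (rule Henstock_Kurzweil_Integration.integral_nonneg)
  show "g integrable_on {t - T..t}"
    using assms by (intro integrable_continuous_real) (auto intro: continuous_on_subset)
qed (use assms in auto)

lemma DERIV_upper_bound_imp_le:
  fixes V :: "real \<Rightarrow> real"
  assumes "s \<le> t"
    and "\<And>r. s \<le> r \<Longrightarrow> r \<le> t \<Longrightarrow> (V has_real_derivative V' r) (at r)"
    and "\<And>r. s \<le> r \<Longrightarrow> r \<le> t \<Longrightarrow> V' r \<le> B"
  shows "V t \<le> V s + B * (t - s)"
proof -
  have "V t - B * t \<le> V s - B * s"
  proof (rule DERIV_nonpos_imp_nonincreasing[of s t "\<lambda>r. V r - B * r"])
    fix r assume "s \<le> r" "r \<le> t"
    then show "\<exists>D. ((\<lambda>r. V r - B * r) has_real_derivative D) (at r) \<and> D \<le> 0"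
      using assms(2,3) by (intro exI[of _ "V' r - B"]) (auto intro!: derivative_eq_intros)
  qed (rule assms(1))
  then show ?thesis by (simp add: algebra_simps)
qed

lemma lyapunov_drop:
  fixes z :: "real \<Rightarrow> 'a::metric_space"
  assumes "c \<ge> 0" "\<delta> \<ge> 0" "K * \<delta> \<le> \<epsilon>" and lipschitz: "K-lipschitz_on {t..t + \<delta>} z"
    and deriv: "\<And>r. t \<le> r \<Longrightarrow> r \<le> t + \<delta> \<Longrightarrow> (V has_real_derivative V' r) (at r)"
    and decay: "\<And>r. t \<le> r \<Longrightarrow> r \<le> t + \<delta> \<Longrightarrow> V' r \<le> - c * (dist (z r) l)\<^sup>2"
    and far: "2 * \<epsilon> \<le> dist (z t) l"
  shows "V (t + \<delta>) \<le> V t - c * \<epsilon>\<^sup>2 * \<delta>"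
proof -
  have "K \<ge> 0" using lipschitz by (simp add: lipschitz_on_def)
  have rate: "V' r \<le> - c * \<epsilon>\<^sup>2" if "t \<le> r" "r \<le> t + \<delta>" for r
  proof -
    have "dist (z t) (z r) \<le> K * (r - t)"
      using lipschitz_onD[OF lipschitz, of t r] that \<open>\<delta> \<ge> 0\<close> by (simp add: dist_real_def)
    also have "\<dots> \<le> K * \<delta>" using that \<open>K \<ge> 0\<close> by (intro mult_left_mono) auto
    finally have "\<epsilon> \<le> dist (z r) l"
      using \<open>K * \<delta> \<le> \<epsilon>\<close> far dist_triangle[of "z t" l "z r"] by linarith
    moreover have "0 \<le> \<epsilon>"
      using \<open>K * \<delta> \<le> \<epsilon>\<close> \<open>K \<ge> 0\<close> \<open>\<delta> \<ge> 0\<close> mult_nonneg_nonneg[of K \<delta>] by linarith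
    ultimately have "c * \<epsilon>\<^sup>2 \<le> c * (dist (z r) l)\<^sup>2"
      using \<open>c \<ge> 0\<close> by (intro mult_left_mono power_mono) auto
    then show ?thesis using decay[OF that] by linarith
  qed
  have "V (t + \<delta>) \<le> V t + (- c * \<epsilon>\<^sup>2) * (t + \<delta> - t)"
    using \<open>\<delta> \<ge> 0\<close> by (intro DERIV_upper_bound_imp_le[where V' = V'] deriv rate) auto
  then show ?thesis by (simp add: algebra_simps)
qed

text \<open>A Barbalat-type argument: while the Lipschitz trajectory is far from \<open>l\<close> it stays far
  for a definite time, during which \<open>V\<close> drops by a definite amount; since \<open>V\<close> is
  nonincreasing and bounded below, this cannot happen arbitrarily late.\<close>

lemma lyapunov_tendsto:
  fixes z :: "real \<Rightarrow> 'a::metric_space"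
  assumes "c > 0" and lipschitz: "K-lipschitz_on {T..} z"
    and deriv: "\<And>t. t \<ge> T \<Longrightarrow> (V has_real_derivative V' t) (at t)"
    and decay: "\<And>t. t \<ge> T \<Longrightarrow> V' t \<le> - c * (dist (z t) l)\<^sup>2"
    and bounded: "bdd_below (V ` {T..})"
  shows "(z \<longlongrightarrow> l) at_top"
proof (rule tendstoI)
  fix e :: real assume "e > 0"
  define \<epsilon> where "\<epsilon> = e / 2"
  define \<delta> where "\<delta> = \<epsilon> / (K + 1)"
  have "K \<ge> 0" using lipschitz by (simp add: lipschitz_on_def)
  then have "\<epsilon> > 0" "\<delta> > 0"
    using \<open>e > 0\<close> by (simp_all add: \<epsilon>_def \<delta>_def)
  have "K * \<delta> = \<epsilon> * (K / (K + 1))"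
    by (simp add: \<delta>_def)
  also have "\<dots> \<le> \<epsilon>"
    using \<open>\<epsilon> > 0\<close> \<open>K \<ge> 0\<close> by (intro mult_left_le) simp_all
  finally have "K * \<delta> \<le> \<epsilon>" .
  have "Inf (V ` {T..}) < Inf (V ` {T..}) + c * \<epsilon>\<^sup>2 * \<delta>"
    using \<open>c > 0\<close> \<open>\<epsilon> > 0\<close> \<open>\<delta> > 0\<close> by simp
  then obtain t1 where t1: "t1 \<ge> T" "V t1 < Inf (V ` {T..}) + c * \<epsilon>\<^sup>2 * \<delta>"
    by (subst (asm) cInf_less_iff[OF _ bounded]) auto
  have "dist (z t) l < e" if "t \<ge> t1" for t
  proof (rule ccontr)
    assume "\<not> dist (z t) l < e"
    then have "V (t + \<delta>) \<le> V t - c * \<epsilon>\<^sup>2 * \<delta>"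
      using that t1 \<open>c > 0\<close> \<open>\<delta> > 0\<close> \<open>K * \<delta> \<le> \<epsilon>\<close>
      by (intro lyapunov_drop[where z = z and l = l and K = K and V' = V']
          lipschitz_on_subset[OF lipschitz] deriv decay) (auto simp: \<epsilon>_def)
    moreover have "V t \<le> V t1 + 0 * (t - t1)"
    proof (rule DERIV_upper_bound_imp_le[where V' = V'])
      fix r assume "t1 \<le> r"
      then have "r \<ge> T" using t1 by simp
      have "0 \<le> c * (dist (z r) l)\<^sup>2" using \<open>c > 0\<close> by simp
      then show "V' r \<le> 0" using decay[OF \<open>r \<ge> T\<close>] by linarith
    qed (use that t1 deriv in auto)
    moreover have "Inf (V ` {T..}) \<le> V (t + \<delta>)"
      using that t1 \<open>\<delta> > 0\<close> by (intro cInf_lower[OF _ bounded]) auto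
    ultimately show False using t1 by linarith
  qed
  then show "eventually (\<lambda>t. dist (z t) l < e) at_top"
    unfolding eventually_at_top_linorder by blast
qed

lemma has_real_derivative_norm_diff_power2:
  fixes x :: "real \<Rightarrow> 'a::real_inner"
  assumes "(x has_vector_derivative v) (at t)"
  shows "((\<lambda>t. (norm (x t - a))\<^sup>2) has_real_derivative 2 * ((x t - a) \<bullet> v)) (at t)"
proof -
  have diff: "((\<lambda>t. x t - a) has_derivative (\<lambda>h. h *\<^sub>R v)) (at t)"
    using assms unfolding has_vector_derivative_def
    by (rule has_derivative_diff[OF _ has_derivative_const, simplified])
  have "((\<lambda>t. (x t - a) \<bullet> (x t - a)) has_derivative
      (\<lambda>h. (x t - a) \<bullet> (h *\<^sub>R v) + (h *\<^sub>R v) \<bullet> (x t - a))) (at t)"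
    by (rule has_derivative_inner[OF diff diff])
  moreover have "(\<lambda>h. (x t - a) \<bullet> (h *\<^sub>R v) + (h *\<^sub>R v) \<bullet> (x t - a)) = (*) (2 * ((x t - a) \<bullet> v))"
    by (auto simp: fun_eq_iff inner_commute)
  ultimately show ?thesis
    by (simp add: has_field_derivative_def power2_norm_eq_inner)
qed

locale coupled_trajectory =
  fixes f1 f2 :: "real^'m \<Rightarrow> real^'m" and G :: "real^'p^'m"
    and k12 k21 T12 T21 c :: real and x1 x2 :: "real \<Rightarrow> real^'m" and a b :: "real^'m"
  assumes k12_pos: "k12 > 0" and k21_pos: "k21 > 0"
    and T12_nonneg: "T12 \<ge> 0" and T21_nonneg: "T21 \<ge> 0"
    and continuous_f1: "continuous_on UNIV f1" and continuous_f2: "continuous_on UNIV f2"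
    and c_pos: "c > 0"
    and dissipative: "strongly_dissipative c (map_prod (\<lambda>x. k21 *\<^sub>R f1 x) (\<lambda>x. k12 *\<^sub>R f2 x))"
    and equilibrium: "coupled_equilibrium f1 f2 G k12 k21 a b"
    and solution: "coupled_solution f1 f2 G k12 k21 T12 T21 x1 x2"
begin

definition velocity1 :: "real \<Rightarrow> real^'m" where
  "velocity1 t = f1 (x1 t) + (1 / k21) *\<^sub>R ((G ** transpose G) *v (x2 (t - T21) - x1 t))"

definition velocity2 :: "real \<Rightarrow> real^'m" where
  "velocity2 t = f2 (x2 t) + (1 / k12) *\<^sub>R ((G ** transpose G) *v (x1 (t - T12) - x2 t))"

lemma continuous_on_x1: "continuous_on {- max T12 T21..} x1"
  and continuous_on_x2: "continuous_on {- max T12 T21..} x2"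
  and has_vector_derivative_x1: "t > 0 \<Longrightarrow> (x1 has_vector_derivative velocity1 t) (at t)"
  and has_vector_derivative_x2: "t > 0 \<Longrightarrow> (x2 has_vector_derivative velocity2 t) (at t)"
  using solution by (simp_all add: coupled_solution_def velocity1_def velocity2_def)

definition coupling_energy1 :: "real \<Rightarrow> real" where
  "coupling_energy1 s = (norm (transpose G *v (x1 s - a)))\<^sup>2"

definition coupling_energy2 :: "real \<Rightarrow> real" where
  "coupling_energy2 s = (norm (transpose G *v (x2 s - b)))\<^sup>2"

lemma continuous_on_coupling_energy1: "continuous_on {- max T12 T21..} coupling_energy1"
  and continuous_on_coupling_energy2: "continuous_on {- max T12 T21..} coupling_energy2"
  unfolding coupling_energy1_def coupling_energy2_def
  by (intro continuous_intros bounded_linear.continuous_on[OF matrix_vector_mul_bounded_linear]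
      continuous_on_x1 continuous_on_x2)+

definition lyapunov :: "real \<Rightarrow> real" where
  "lyapunov t = k21 * (norm (x1 t - a))\<^sup>2 + k12 * (norm (x2 t - b))\<^sup>2
     + integral {t - T21..t} coupling_energy2 + integral {t - T12..t} coupling_energy1"

definition lyapunov_rate :: "real \<Rightarrow> real" where
  "lyapunov_rate t =
     2 * ((x1 t - a) \<bullet> (k21 *\<^sub>R velocity1 t)) + 2 * ((x2 t - b) \<bullet> (k12 *\<^sub>R velocity2 t))
     + (coupling_energy2 t - coupling_energy2 (t - T21))
     + (coupling_energy1 t - coupling_energy1 (t - T12))"

lemma lyapunov_has_derivative:
  assumes "t > 0"
  shows "(lyapunov has_real_derivative lyapunov_rate t) (at t)"
proof -
  have "- max T12 T21 + T21 < t" "- max T12 T21 + T12 < t"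
    using assms by auto
  then have "((\<lambda>s. integral {s - T21..s} coupling_energy2) has_real_derivative
      coupling_energy2 t - coupling_energy2 (t - T21)) (at t)"
    "((\<lambda>s. integral {s - T12..s} coupling_energy1) has_real_derivative
      coupling_energy1 t - coupling_energy1 (t - T12)) (at t)"
    using has_real_derivative_integral_window[OF continuous_on_coupling_energy2 T21_nonneg]
      has_real_derivative_integral_window[OF continuous_on_coupling_energy1 T12_nonneg]
    by auto
  then have "(lyapunov has_real_derivative
      k21 * (2 * ((x1 t - a) \<bullet> velocity1 t)) + k12 * (2 * ((x2 t - b) \<bullet> velocity2 t))
      + (coupling_energy2 t - coupling_energy2 (t - T21))
      + (coupling_energy1 t - coupling_energy1 (t - T12))) (at t)"
    unfolding lyapunov_def using assms
    by (intro DERIV_add DERIV_cmult has_real_derivative_norm_diff_power2 has_vector_derivative_x1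
        has_vector_derivative_x2)
  then show ?thesis
    by (rule DERIV_cong) (simp add: lyapunov_rate_def algebra_simps)
qed

lemma equilibrium_balance:
  "k21 *\<^sub>R f1 a + (G ** transpose G) *v (b - a) = 0"
  "k12 *\<^sub>R f2 b + (G ** transpose G) *v (a - b) = 0"
  using equilibrium coupled_equilibrium_iff_zero[OF k12_pos k21_pos, of f1 f2 G a b]
  by (simp_all add: coupling_field_def zero_prod_def)

lemma lyapunov_rate_le:
  assumes "t > 0"
  shows "lyapunov_rate t \<le> - 2 * c * (dist (x1 t, x2 t) (a, b))\<^sup>2"
proof -
  define M where "M = G ** transpose G"
  define e1 e2 where "e1 = x1 t - a" and "e2 = x2 t - b"
  define d1 d2 where "d1 = x1 (t - T12) - a" and "d2 = x2 (t - T21) - b"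
  define D1 D2 where "D1 = k21 *\<^sub>R f1 (x1 t) - k21 *\<^sub>R f1 a"
    and "D2 = k12 *\<^sub>R f2 (x2 t) - k12 *\<^sub>R f2 b"
  define w1 w2 where "w1 = M *v (d2 - e1)" and "w2 = M *v (d1 - e2)"
  define coupling where "coupling = 2 * (e1 \<bullet> w1) + 2 * (e2 \<bullet> w2)
    + (norm (transpose G *v e2))\<^sup>2 - (norm (transpose G *v d2))\<^sup>2
    + (norm (transpose G *v e1))\<^sup>2 - (norm (transpose G *v d1))\<^sup>2"
  have "k21 *\<^sub>R velocity1 t = D1 + w1"
    using k21_pos equilibrium_balance(1)
    by (simp add: velocity1_def D1_def w1_def M_def e1_def d2_def algebra_simps)
  moreover have "k12 *\<^sub>R velocity2 t = D2 + w2"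
    using k12_pos equilibrium_balance(2)
    by (simp add: velocity2_def D2_def w2_def M_def e2_def d1_def algebra_simps)
  ultimately have "lyapunov_rate t = 2 * (e1 \<bullet> (D1 + w1)) + 2 * (e2 \<bullet> (D2 + w2))
      + ((norm (transpose G *v e2))\<^sup>2 - (norm (transpose G *v d2))\<^sup>2)
      + ((norm (transpose G *v e1))\<^sup>2 - (norm (transpose G *v d1))\<^sup>2)"
    by (simp add: lyapunov_rate_def coupling_energy1_def coupling_energy2_def
        e1_def e2_def d1_def d2_def)
  also have "\<dots> = 2 * ((D1, D2) \<bullet> (e1, e2)) + coupling"
    by (simp add: coupling_def inner_add_right inner_commute algebra_simps)
  also have "\<dots> \<le> 2 * (- c * (dist (x1 t, x2 t) (a, b))\<^sup>2) + 0"
  proof (rule add_mono)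
    show "2 * ((D1, D2) \<bullet> (e1, e2)) \<le> 2 * (- c * (dist (x1 t, x2 t) (a, b))\<^sup>2)"
      using dissipative[unfolded strongly_dissipative_def, rule_format, of "(x1 t, x2 t)" "(a, b)"]
      by (simp add: D1_def D2_def e1_def e2_def dist_norm)
    show "coupling \<le> 0"
      using coupling_power_le[of e1 G d2 e2 d1] by (simp add: coupling_def w1_def w2_def M_def)
  qed
  finally show ?thesis by simp
qed

lemma lyapunov_lower_bound:
  assumes "t \<ge> 0"
  shows "min k12 k21 * (dist (x1 t, x2 t) (a, b))\<^sup>2 \<le> lyapunov t"
proof -
  have "min k12 k21 * (dist (x1 t, x2 t) (a, b))\<^sup>2
      = min k12 k21 * (norm (x1 t - a))\<^sup>2 + min k12 k21 * (norm (x2 t - b))\<^sup>2"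
    unfolding dist_Pair_Pair by (simp add: dist_norm algebra_simps)
  also have "\<dots> \<le> k21 * (norm (x1 t - a))\<^sup>2 + k12 * (norm (x2 t - b))\<^sup>2"
    by (intro add_mono mult_right_mono) auto
  also have "\<dots> \<le> lyapunov t"
    using integral_window_nonneg[OF continuous_on_coupling_energy2, of t T21]
      integral_window_nonneg[OF continuous_on_coupling_energy1, of t T12] assms
    by (simp add: lyapunov_def coupling_energy1_def coupling_energy2_def)
  finally show ?thesis .
qed

lemma lyapunov_antitone:
  assumes "0 < s" "s \<le> t"
  shows "lyapunov t \<le> lyapunov s"
proof -
  have "lyapunov_rate r \<le> 0" if "r > 0" for r
  proof -
    have "0 \<le> 2 * c * (dist (x1 r, x2 r) (a, b))\<^sup>2" using c_pos by simp
    then show ?thesis using lyapunov_rate_le[OF that] by linarith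
  qed
  then show ?thesis
    using DERIV_upper_bound_imp_le[of s t lyapunov lyapunov_rate 0] assms lyapunov_has_derivative
    by simp
qed

lemma bounded_trajectory: "bounded ((\<lambda>t. (x1 t, x2 t)) ` {- max T12 T21..})"
proof -
  define R where "R = sqrt (lyapunov 1 / min k12 k21)"
  have near: "(x1 t, x2 t) \<in> cball (a, b) R" if "t \<ge> 1" for t
  proof -
    have "min k12 k21 * (dist (x1 t, x2 t) (a, b))\<^sup>2 \<le> lyapunov 1"
      using lyapunov_lower_bound[of t] lyapunov_antitone[of 1 t] that by simp
    then have "(dist (x1 t, x2 t) (a, b))\<^sup>2 \<le> lyapunov 1 / min k12 k21"
      using k12_pos k21_pos by (simp add: field_simps)
    then show ?thesis
      by (simp add: R_def dist_commute real_le_rsqrt)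
  qed
  have subset: "(\<lambda>t. (x1 t, x2 t)) ` {- max T12 T21..}
      \<subseteq> (\<lambda>t. (x1 t, x2 t)) ` {- max T12 T21..1} \<union> cball (a, b) R"
  proof
    fix p assume "p \<in> (\<lambda>t. (x1 t, x2 t)) ` {- max T12 T21..}"
    then obtain t where "t \<ge> - max T12 T21" "p = (x1 t, x2 t)" by auto
    then show "p \<in> (\<lambda>t. (x1 t, x2 t)) ` {- max T12 T21..1} \<union> cball (a, b) R"
      using near[of t] by (cases "t \<le> 1") auto
  qed
  have "compact ((\<lambda>t. (x1 t, x2 t)) ` {- max T12 T21..1})"
    by (intro compact_continuous_image continuous_on_Pair compact_Icc)
      (auto intro: continuous_on_subset continuous_on_x1 continuous_on_x2)
  then show ?thesis
    by (intro bounded_subset[OF _ subset] bounded_Un[THEN iffD2] conjI compact_imp_bounded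
        bounded_cball)
qed

lemma bounded_velocity:
  obtains B where "\<And>t. t > 0 \<Longrightarrow> norm (velocity1 t, velocity2 t) \<le> B"
proof -
  obtain R where R: "\<And>s. s \<ge> - max T12 T21 \<Longrightarrow> norm (x1 s, x2 s) \<le> R"
    using bounded_trajectory unfolding bounded_iff by auto
  define S where "S = cball (0::real^'m) R \<times> cball (0::real^'m) R"
  define \<phi>1 where "\<phi>1 p = f1 (fst p) + (1 / k21) *\<^sub>R ((G ** transpose G) *v (snd p - fst p))" for p
  define \<phi>2 where "\<phi>2 p = f2 (snd p) + (1 / k12) *\<^sub>R ((G ** transpose G) *v (fst p - snd p))" for p
  have "continuous_on S \<phi>1" "continuous_on S \<phi>2"
    unfolding \<phi>1_def \<phi>2_def
    by (intro continuous_intros continuous_on_compose2[OF continuous_f1 _ subset_UNIV]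
        continuous_on_compose2[OF continuous_f2 _ subset_UNIV]
        bounded_linear.continuous_on[OF matrix_vector_mul_bounded_linear])+
  moreover have "compact S" by (simp add: S_def compact_Times)
  ultimately have "bounded (\<phi>1 ` S)" "bounded (\<phi>2 ` S)"
    by (simp_all add: compact_imp_bounded compact_continuous_image)
  then obtain B1 B2 where B1: "\<And>p. p \<in> S \<Longrightarrow> norm (\<phi>1 p) \<le> B1"
    and B2: "\<And>p. p \<in> S \<Longrightarrow> norm (\<phi>2 p) \<le> B2"
    unfolding bounded_iff by blast
  have "norm (velocity1 t, velocity2 t) \<le> B1 + B2" if "t > 0" for t
  proof -
    have "norm (x1 s) \<le> R" "norm (x2 s) \<le> R" if "s \<ge> - max T12 T21" for s
      using R[OF that] norm_fst_le[of "x1 s" "x2 s"] norm_snd_le[of "x2 s" "x1 s"] by linarith+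
    then have "(x1 t, x2 (t - T21)) \<in> S" "(x1 (t - T12), x2 t) \<in> S"
      using \<open>t > 0\<close> T12_nonneg T21_nonneg by (auto simp: S_def)
    moreover have "velocity1 t = \<phi>1 (x1 t, x2 (t - T21))" "velocity2 t = \<phi>2 (x1 (t - T12), x2 t)"
      by (simp_all add: velocity1_def velocity2_def \<phi>1_def \<phi>2_def)
    ultimately show ?thesis
      using B1 B2 norm_Pair_le[of "velocity1 t" "velocity2 t"] by fastforce
  qed
  then show ?thesis by (rule that)
qed

lemma lipschitz_trajectory:
  obtains K where "K-lipschitz_on {1..} (\<lambda>t. (x1 t, x2 t))"
proof -
  obtain B where B: "\<And>t. t > 0 \<Longrightarrow> norm (velocity1 t, velocity2 t) \<le> B"
    using bounded_velocity by blast
  have "B-lipschitz_on {1..} (\<lambda>t. (x1 t, x2 t))"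
  proof (rule bounded_derivative_imp_lipschitz[where f' = "\<lambda>t h. h *\<^sub>R (velocity1 t, velocity2 t)"])
    fix t :: real assume "t \<in> {1..}"
    then have "t > 0" by simp
    have "((\<lambda>t. (x1 t, x2 t)) has_vector_derivative (velocity1 t, velocity2 t)) (at t)"
      using \<open>t > 0\<close> by (intro has_vector_derivative_Pair has_vector_derivative_x1 has_vector_derivative_x2)
    then show "((\<lambda>t. (x1 t, x2 t)) has_derivative (\<lambda>h. h *\<^sub>R (velocity1 t, velocity2 t)))
        (at t within {1..})"
      unfolding has_vector_derivative_def by (rule has_derivative_at_withinI)
    have "onorm (\<lambda>h. h *\<^sub>R (velocity1 t, velocity2 t)) = norm (velocity1 t, velocity2 t)"
      using onorm_scaleR_left[OF bounded_linear_ident, of "(velocity1 t, velocity2 t)"]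
      by (simp only: onorm_id mult_1)
    then show "onorm (\<lambda>h. h *\<^sub>R (velocity1 t, velocity2 t)) \<le> B"
      using B[OF \<open>t > 0\<close>] by (simp only:)
  next
    show "0 \<le> B" using B[of 1] norm_ge_zero by (meson dual_order.trans zero_less_one)
  qed (simp add: convex_real_interval)
  then show ?thesis by (rule that)
qed

lemma trajectory_tendsto: "((\<lambda>t. (x1 t, x2 t)) \<longlongrightarrow> (a, b)) at_top"
proof -
  obtain K where "K-lipschitz_on {1..} (\<lambda>t. (x1 t, x2 t))"
    using lipschitz_trajectory by blast
  moreover have "bdd_below (lyapunov ` {1..})"
  proof (rule bdd_belowI)
    fix v assume "v \<in> lyapunov ` {1..}"
    then obtain t where "t \<ge> 1" "v = lyapunov t" by auto
    moreover have "0 \<le> min k12 k21 * (dist (x1 t, x2 t) (a, b))\<^sup>2"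
      using k12_pos k21_pos by simp
    ultimately show "0 \<le> v"
      using lyapunov_lower_bound[of t] by simp
  qed
  ultimately show ?thesis
    using c_pos lyapunov_has_derivative lyapunov_rate_le
    by (intro lyapunov_tendsto[where c = "2 * c" and T = 1 and V' = lyapunov_rate]) auto
qed

end

theorem mainTheorem2:
  fixes f1 f2 :: "real^'m \<Rightarrow> real^'m"
    and G :: "real^'p^'m"
    and k12 k21 :: real
  assumes "contracting_field f1" and "contracting_field f2"
    and "k12 > 0" and "k21 > 0"
  shows "(\<exists>!(a, b). coupled_equilibrium f1 f2 G k12 k21 a b) \<and>
         (\<forall>a b. coupled_equilibrium f1 f2 G k12 k21 a b \<longrightarrow>
           (\<forall>T12 T21 x1 x2. T12 \<ge> 0 \<longrightarrow> T21 \<ge> 0 \<longrightarrow>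
              coupled_solution f1 f2 G k12 k21 T12 T21 x1 x2 \<longrightarrow>
              ((\<lambda>t. (x1 t, x2 t)) \<longlongrightarrow> (a, b)) at_top))"
proof -
  obtain c where "c > 0"
    and dissipative: "strongly_dissipative c (map_prod (\<lambda>x. k21 *\<^sub>R f1 x) (\<lambda>x. k12 *\<^sub>R f2 x))"
    by (rule contracting_field_pair_strongly_dissipative[OF assms])
  obtain L1 where L1: "L1-lipschitz_on UNIV f1"
    by (rule contracting_field_lipschitz[OF assms(1)])
  obtain L2 where L2: "L2-lipschitz_on UNIV f2"
    by (rule contracting_field_lipschitz[OF assms(2)])
  show ?thesis
  proof (intro conjI allI impI)
    show "\<exists>!(a, b). coupled_equilibrium f1 f2 G k12 k21 a b"
      using coupled_equilibrium_ex1[OF assms(3,4) \<open>c > 0\<close> dissipative L1 L2] .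
  next
    fix a b T12 T21 x1 x2
    assume "coupled_equilibrium f1 f2 G k12 k21 a b" "T12 \<ge> 0" "T21 \<ge> 0"
      "coupled_solution f1 f2 G k12 k21 T12 T21 x1 x2"
    then interpret coupled_trajectory f1 f2 G k12 k21 T12 T21 c x1 x2 a b
      using assms(3,4) \<open>c > 0\<close> dissipative
        L1[THEN lipschitz_on_continuous_on] L2[THEN lipschitz_on_continuous_on]
      by unfold_locales auto
    show "((\<lambda>t. (x1 t, x2 t)) \<longlongrightarrow> (a, b)) at_top"
      by (rule trajectory_tendsto)
  qed
qed

end
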